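(* Let $D$ be a distribution over $\mathcal{X}\times\mathcal{Y}$ ($\mathcal{X}\subset\mathbb{R}^d$, $\mathcal{Y}=\{1,\dots,c\}$) that is $(k_1,\dots,k_n)$-separable with $\delta$-margin by unit projection vectors $a_1,\dots,a_n\in\mathbb{R}^d$. Then there exists a 2-layer network $p:\mathcal{X}\to\mathbb{R}^n$, $p(x)=(p^1(x),\dots,p^n(x))^T$, where each coordinate is of the form $$p^s(x)=\sum_{l=1}^{k_s} v_{s,l}\,\rho\big(u_s^Tx-\beta_{s,l}\big),\qquad u_s\in\mathbb{R}^d,\ \beta_{s,l},v_{s,l}\in\mathbb{R},$$ such that, when $(x,y)\sim D$, the distribution $D'$ of $(p(x),y)$ over $\mathbb{R}^n\times\mathcal{Y}$ is $\big(\prod_{s=1}^n k_s\big)$-separable with $\frac{1}{4\sqrt n}$-margin, witnessed by the projection vector $a=\frac{1}{\sqrt n}(1,1,\dots,1)^T\in\mathbb{R}^n$.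
   Context: $\rho(t)=1/(1+e^{-t})$ is the sigmoid function. Definition ($k$-separable with $\delta$-margin): Let $\mathcal{X}\subset\mathbb{R}^d$ and $\mathcal{Y}=\{1,\dots,c\}$. A distribution $D$ over $\mathcal{X}\times\mathcal{Y}$ is $k$-separable with $\delta$-margin ($\delta>0$) if there exist a projection vector $a\in\mathbb{R}^d$ with $\|a\|_2=1$ and constants $b_1<b_2<\cdots<b_{k+1}$ such that, setting $\mathcal{X}_i=\{x\in\mathcal{X}: b_i+\delta<a^Tx<b_{i+1}-\delta\}$ for $i\in\{1,\dots,k\}$: (i) for each $i$ there is $y_i\in\mathcal{Y}$ with $\mathbb{P}_{(x,y)\sim D}(y=y_i\mid x\in\mathcal{X}_i)=1$; (ii) $\mathbb{P}_{(x,y)\sim D}\big(x\in\bigcup_{i=1}^k\mathcal{X}_i\big)=1$. (Here the ambient space may be any $\mathbb{R}^{d}$, in particular $\mathbb{R}^n$.) Definition ($(k_1,\dots,k_n)$-separable with $\delta$-margin): $D$ over $\mathcal{X}\times\mathcal{Y}$ is $(k_1,\dots,k_n)$-separable with $\delta$-margin ($\delta>0$) if there exist $a_1,\dots,a_n\in\mathbb{R}^d$ with $\|a_s\|_2=1$ and constants $b_{s,1}<b_{s,2}<\cdots<b_{s,k_s+1}$ for each $s\in\{1,\dots,n\}$ such that, for each multi-index $\mathbf{i}=(i_1,\dots,i_n)$ with $i_s\in\{1,\dots,k_s\}$ and $\mathcal{X}_{\mathbf{i}}=\{x\in\mathcal{X}: b_{s,i_s}+\delta<a_s^Tx<b_{s,i_s+1}-\delta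 \text{ for all } 1\le s\le n\}$: (i) there is $y_{\mathbf{i}}\in\mathcal{Y}$ with $\mathbb{P}_{(x,y)\sim D}(y=y_{\mathbf{i}}\mid x\in\mathcal{X}_{\mathbf{i}})=1$; (ii) $\mathbb{P}_{(x,y)\sim D}\big(x\in\bigcup_{\mathbf{i}}\mathcal{X}_{\mathbf{i}}\big)=1$. *)

theory Defs
  imports "HOL-Probability.Probability"
begin

definition sigmoid :: "real \<Rightarrow> real" where
  "sigmoid t = 1 / (1 + exp (- t))"

text \<open>P(y = y_i | x \<in> X_i) = 1 is rendered as P(x \<in> X_i \<and> y = y_i) = P(x \<in> X_i).\<close>
definition k_separable_by ::
  "('a::euclidean_space \<times> nat) measure \<Rightarrow> nat \<Rightarrow> real \<Rightarrow> 'a \<Rightarrow> bool" where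
  "k_separable_by D k \<delta> a \<longleftrightarrow>
     \<delta> > 0 \<and> norm a = 1 \<and>
     (\<exists>b :: nat \<Rightarrow> real.
        (\<forall>j\<in>{1..k}. b j < b (Suc j)) \<and>
        (\<forall>i\<in>{1..k}. \<exists>yi.
           measure D {z \<in> space D. b i + \<delta> < a \<bullet> fst z \<and> a \<bullet> fst z < b (Suc i) - \<delta> \<and> snd z = yi}
         = measure D {z \<in> space D. b i + \<delta> < a \<bullet> fst z \<and> a \<bullet> fst z < b (Suc i) - \<delta>}) \<and>
        measure D {z \<in> space D. \<exists>i\<in>{1..k}. b i + \<delta> < a \<bullet> fst z \<and> a \<bullet> fst z < b (Suc i) - \<delta>} = 1)"

text \<open>(k_1,...,k_n)-separable with delta-margin, witnessed by projection vectors a_s;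
  the coordinates s range over a finite type 'n (n = CARD('n)); multi-indices are
  functions i :: 'n \<Rightarrow> nat with 1 \<le> i s \<le> k s.\<close>
definition multi_separable_by ::
  "('a::euclidean_space \<times> nat) measure \<Rightarrow> ('n::finite \<Rightarrow> nat) \<Rightarrow> real \<Rightarrow> ('n \<Rightarrow> 'a) \<Rightarrow> bool" where
  "multi_separable_by D k \<delta> a \<longleftrightarrow>
     \<delta> > 0 \<and> (\<forall>s. norm (a s) = 1) \<and>
     (\<exists>b :: 'n \<Rightarrow> nat \<Rightarrow> real.
        (\<forall>s. \<forall>j\<in>{1..k s}. b s j < b s (Suc j)) \<and>
        (\<forall>i :: 'n \<Rightarrow> nat. (\<forall>s. i s \<in> {1..k s}) \<longrightarrow> (\<exists>yi.
           measure D {z \<in> space D. (\<forall>s. b s (i s) + \<delta> < a s \<bullet> fst z \<and> a s \<bullet> fst z < b s (Suc (i s)) - \<delta>) \<and> snd z = yi}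
         = measure D {z \<in> space D. (\<forall>s. b s (i s) + \<delta> < a s \<bullet> fst z \<and> a s \<bullet> fst z < b s (Suc (i s)) - \<delta>)})) \<and>
        measure D {z \<in> space D. \<exists>i :: 'n \<Rightarrow> nat. (\<forall>s. i s \<in> {1..k s}) \<and>
            (\<forall>s. b s (i s) + \<delta> < a s \<bullet> fst z \<and> a s \<bullet> fst z < b s (Suc (i s)) - \<delta>)} = 1)"

end

theory Submission
  imports Defs
begin

text \<open>
  A sum of k steep sigmoids placed at the interior thresholds of the s-th projection computes,
  on the cell with index i, the staircase value i - 1 up to an error that decays exponentially
  in the slope. Weighting coordinate s by its mixed-radix place value (the product of the
  k_t over the coordinates t preceding s) makes the sum of the n coordinate networks
  approximate, within 1/8, an injective code of the multi-index with values in
  0, ..., (prod k_s) - 1. So every cell lands in its own interval of radius 1/4 about an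
  integer; these intervals are label-pure and cover almost everything, and projecting onto
  (1, ..., 1)/sqrt n merely rescales the sum by 1/sqrt n.
\<close>

lemma sigmoid_le_exp: "sigmoid t \<le> exp t"
proof -
  have "1 / (1 + exp (- t)) \<le> 1 / exp (- t)"
    by (intro divide_left_mono) (auto simp: add_pos_pos)
  also have "\<dots> = exp t"
    by (simp add: exp_minus field_simps)
  finally show ?thesis unfolding sigmoid_def .
qed

lemma sigmoid_minus: "sigmoid (- t) = 1 - sigmoid t"
proof -
  have "1 + exp t \<noteq> 0"
    by (smt (verit) exp_gt_zero)
  then show ?thesis
    unfolding sigmoid_def by (simp add: exp_minus field_simps)
qed

lemma sigmoid_nonneg: "0 \<le> sigmoid t"
  unfolding sigmoid_def by (simp add: add_pos_pos)

lemma sigmoid_le_1: "sigmoid t \<le> 1"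
  unfolding sigmoid_def by (simp add: add_pos_pos)

lemma sigmoid_step_approx: "\<bar>sigmoid t - (if 0 \<le> t then 1 else 0)\<bar> \<le> exp (- \<bar>t\<bar>)"
proof (cases "0 \<le> t")
  case True
  have "1 - sigmoid t \<le> exp (- t)"
    using sigmoid_le_exp[of "- t"] by (simp add: sigmoid_minus)
  with True show ?thesis
    using sigmoid_le_1[of t] by simp
next
  case False
  with sigmoid_le_exp[of t] show ?thesis
    using sigmoid_nonneg[of t] by simp
qed

lemma continuous_on_sigmoid: "continuous_on A sigmoid"
  unfolding sigmoid_def by (intro continuous_intros) (smt (verit) exp_gt_zero)

lemma borel_measurable_sigmoid[measurable]: "sigmoid \<in> borel_measurable borel"
  by (rule borel_measurable_continuous_onI[OF continuous_on_sigmoid])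

lemma sigmoid_scaled_step_approx:
  assumes "\<delta> < \<bar>y\<bar>" "\<delta> > 0" "T > 0"
  shows "\<bar>sigmoid (T / \<delta> * y) - (if 0 < y then 1 else 0)\<bar> \<le> exp (- T)"
proof -
  have slope: "T / \<delta> > 0"
    using assms by simp
  have "T = T / \<delta> * \<delta>"
    using assms by simp
  also have "\<dots> \<le> T / \<delta> * \<bar>y\<bar>"
    using assms slope by (intro mult_left_mono) auto
  also have "\<dots> = \<bar>T / \<delta> * y\<bar>"
    using assms by (simp add: abs_mult)
  finally have far: "T \<le> \<bar>T / \<delta> * y\<bar>" .
  have "0 \<le> T / \<delta> * y \<longleftrightarrow> 0 < y"
    using assms slope unfolding zero_le_mult_iff by linarith
  then have "\<bar>sigmoid (T / \<delta> * y) - (if 0 < y then 1 else 0)\<bar> \<le> exp (- \<bar>T / \<delta> * y\<bar>)"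
    using sigmoid_step_approx[of "T / \<delta> * y"] by simp
  also have "\<dots> \<le> exp (- T)"
    using far by simp
  finally show ?thesis .
qed

lemma sigmoid_staircase_approx:
  fixes b :: "nat \<Rightarrow> real"
  assumes mono: "\<forall>j\<in>{1..k}. b j < b (Suc j)" and i: "i \<in> {1..k}"
    and y: "b i + \<delta> < y" "y < b (Suc i) - \<delta>" and "\<delta> > 0" "T > 0"
  shows "\<bar>(\<Sum>l=1..k. sigmoid (T / \<delta> * (y - b (Suc l)))) - real (i - 1)\<bar> \<le> real k * exp (- T)"
proof -
  have b_le: "b m \<le> b m'" if "1 \<le> m" "m \<le> m'" "m' \<le> Suc k" for m m'
    using lift_Suc_mono_le_ivl[of "{1..k}" b m m'] mono that by fastforce
  have step: "\<bar>sigmoid (T / \<delta> * (y - b (Suc l))) - (if l < i then 1 else 0)\<bar> \<le> exp (- T)"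
    if l: "l \<in> {1..k}" for l
  proof (cases "l < i")
    case True
    then have "\<delta> < y - b (Suc l)"
      using b_le[of "Suc l" i] l i y by auto
    then show ?thesis
      using True sigmoid_scaled_step_approx[of \<delta> "y - b (Suc l)" T] \<open>\<delta> > 0\<close> \<open>T > 0\<close> by simp
  next
    case False
    then have "y - b (Suc l) < - \<delta>"
      using b_le[of "Suc i" "Suc l"] l i y by auto
    then show ?thesis
      using False sigmoid_scaled_step_approx[of \<delta> "y - b (Suc l)" T] \<open>\<delta> > 0\<close> \<open>T > 0\<close> by simp
  qed
  have "(\<Sum>l=1..k. if l < i then 1 else 0) = real (card ({1..k} \<inter> {..<i}))"
    by (simp add: sum.If_cases lessThan_def)
  also have "{1..k} \<inter> {..<i} = {1..<i}"
    using i by auto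
  finally have "real (i - 1) = (\<Sum>l=1..k. if l < i then 1 else 0)"
    by simp
  then have "\<bar>(\<Sum>l=1..k. sigmoid (T / \<delta> * (y - b (Suc l)))) - real (i - 1)\<bar>
      \<le> (\<Sum>l=1..k. \<bar>sigmoid (T / \<delta> * (y - b (Suc l))) - (if l < i then 1 else 0)\<bar>)"
    by (simp only: sum_subtractf[symmetric] sum_abs)
  also have "\<dots> \<le> real (card {1..k}) * exp (- T)"
    using step by (intro sum_bounded_above) auto
  finally show ?thesis
    by simp
qed

lemma mixed_radix_less:
  fixes d r :: "nat \<Rightarrow> nat"
  assumes "\<forall>j<m. d j < r j"
  shows "(\<Sum>j<m. d j * (\<Prod>i<j. r i)) < (\<Prod>i<m. r i)"
  using assms
proof (induction m)
  case 0
  then show ?case by simp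
next
  case (Suc m)
  have "(\<Sum>j<Suc m. d j * (\<Prod>i<j. r i)) < (\<Prod>i<m. r i) + d m * (\<Prod>i<m. r i)"
    using Suc by simp
  also have "\<dots> = (d m + 1) * (\<Prod>i<m. r i)"
    by simp
  also have "\<dots> \<le> r m * (\<Prod>i<m. r i)"
    using Suc.prems by (intro mult_right_mono) auto
  also have "\<dots> = (\<Prod>i<Suc m. r i)"
    by (simp add: mult.commute)
  finally show ?case .
qed

lemma mixed_radix_inj:
  fixes d d' r :: "nat \<Rightarrow> nat"
  assumes "\<forall>j<m. d j < r j" "\<forall>j<m. d' j < r j"
    and "(\<Sum>j<m. d j * (\<Prod>i<j. r i)) = (\<Sum>j<m. d' j * (\<Prod>i<j. r i))"
  shows "\<forall>j<m. d j = d' j"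
  using assms
proof (induction m)
  case 0
  then show ?case by simp
next
  case (Suc m)
  define P where "P = (\<Prod>i<m. r i)"
  define S where "S d = (\<Sum>j<m. d j * (\<Prod>i<j. r i))" for d :: "nat \<Rightarrow> nat"
  have bound: "S d < P" "S d' < P"
    unfolding S_def P_def using Suc.prems by (auto intro: mixed_radix_less)
  have split: "S d + d m * P = S d' + d' m * P"
    using Suc.prems(3) by (simp add: S_def P_def)
  have "(S d + d m * P) div P = d m" "(S d' + d' m * P) div P = d' m"
    using bound by simp_all
  with split have top: "d m = d' m"
    by metis
  with split have "S d = S d'"
    by simp
  moreover have "\<forall>j<m. d j < r j" "\<forall>j<m. d' j < r j"
    using Suc.prems(1,2) by simp_all
  ultimately have "\<forall>j<m. d j = d' j"
    using Suc.IH unfolding S_def by blast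
  with top show ?case
    by (simp add: less_Suc_eq)
qed

lemma mixed_radix_code:
  fixes r :: "'n::finite \<Rightarrow> nat"
  obtains w :: "'n \<Rightarrow> nat" where
    "\<And>d. \<forall>s. d s < r s \<Longrightarrow> (\<Sum>s\<in>UNIV. d s * w s) < (\<Prod>s\<in>UNIV. r s)"
    "inj_on (\<lambda>d. \<Sum>s\<in>UNIV. d s * w s) {d. \<forall>s. d s < r s}"
proof -
  obtain e :: "'n \<Rightarrow> nat" where e: "bij_betw e UNIV {..<CARD('n)}"
    using ex_bij_betw_finite_nat[of "UNIV :: 'n set"] by (auto simp: atLeast0LessThan)
  define g where "g = inv_into UNIV e"
  have g_e: "g (e s) = s" for s
    unfolding g_def using bij_betw_inv_into_left[OF e] by simp
  define w where "w s = (\<Prod>i<e s. r (g i))" for s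
  have code: "(\<Sum>s\<in>UNIV. d s * w s) = (\<Sum>j<CARD('n). d (g j) * (\<Prod>i<j. r (g i)))" for d
    using sum.reindex_bij_betw[OF e, of "\<lambda>j. d (g j) * (\<Prod>i<j. r (g i))"] by (simp add: w_def g_e)
  have range: "(\<Prod>s\<in>UNIV. r s) = (\<Prod>i<CARD('n). r (g i))"
    using prod.reindex_bij_betw[OF e, of "\<lambda>i. r (g i)"] by (simp add: g_e)
  show ?thesis
  proof (rule that)
    show "(\<Sum>s\<in>UNIV. d s * w s) < (\<Prod>s\<in>UNIV. r s)" if "\<forall>s. d s < r s" for d
      unfolding code range using that by (intro mixed_radix_less) simp
    show "inj_on (\<lambda>d. \<Sum>s\<in>UNIV. d s * w s) {d. \<forall>s. d s < r s}"
    proof (rule inj_onI, rule ext)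
      fix d d' s
      assume "d \<in> {d. \<forall>s. d s < r s}" "d' \<in> {d. \<forall>s. d s < r s}"
        and "(\<Sum>s\<in>UNIV. d s * w s) = (\<Sum>s\<in>UNIV. d' s * w s)"
      then have "\<forall>j<CARD('n). d (g j) = d' (g j)"
        unfolding code by (intro mixed_radix_inj) simp_all
      moreover have "e s < CARD('n)"
        using e by (auto simp: bij_betw_def)
      ultimately show "d s = d' s"
        using g_e by metis
    qed
  qed
qed

lemma sigmoid_network_approx:
  fixes a :: "'n::finite \<Rightarrow> 'a::real_inner" and b :: "'n \<Rightarrow> nat \<Rightarrow> real" and w :: "'n \<Rightarrow> real"
  assumes mono: "\<forall>s. \<forall>j\<in>{1..k s}. b s j < b s (Suc j)" and "\<delta> > 0" "T > 0" "\<forall>s. w s \<ge> 0"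
    and i: "\<forall>s. i s \<in> {1..k s}"
    and x: "\<forall>s. b s (i s) + \<delta> < a s \<bullet> x \<and> a s \<bullet> x < b s (Suc (i s)) - \<delta>"
  shows "\<bar>(\<Sum>s\<in>UNIV. \<Sum>l=1..k s. w s * sigmoid ((T / \<delta>) *\<^sub>R a s \<bullet> x - T / \<delta> * b s (Suc l)))
      - (\<Sum>s\<in>UNIV. w s * real (i s - 1))\<bar> \<le> (\<Sum>s\<in>UNIV. w s * real (k s)) * exp (- T)"
proof -
  have coord: "\<bar>(\<Sum>l=1..k s. w s * sigmoid ((T / \<delta>) *\<^sub>R a s \<bullet> x - T / \<delta> * b s (Suc l))) - w s * real (i s - 1)\<bar>
      \<le> w s * real (k s) * exp (- T)" for s
  proof -
    have "\<bar>(\<Sum>l=1..k s. sigmoid (T / \<delta> * (a s \<bullet> x - b s (Suc l)))) - real (i s - 1)\<bar> \<le> real (k s) * exp (- T)"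
      using sigmoid_staircase_approx[where b = "b s" and k = "k s" and i = "i s" and y = "a s \<bullet> x"] mono i x assms(2,3)
      by blast
    moreover have "(\<Sum>l=1..k s. w s * sigmoid ((T / \<delta>) *\<^sub>R a s \<bullet> x - T / \<delta> * b s (Suc l))) - w s * real (i s - 1)
        = w s * ((\<Sum>l=1..k s. sigmoid (T / \<delta> * (a s \<bullet> x - b s (Suc l)))) - real (i s - 1))"
      by (simp add: sum_distrib_left right_diff_distrib)
    ultimately show ?thesis
      using assms(4) by (simp add: abs_mult mult.assoc mult_left_mono)
  qed
  have "\<bar>(\<Sum>s\<in>UNIV. \<Sum>l=1..k s. w s * sigmoid ((T / \<delta>) *\<^sub>R a s \<bullet> x - T / \<delta> * b s (Suc l)))
      - (\<Sum>s\<in>UNIV. w s * real (i s - 1))\<bar>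
      \<le> (\<Sum>s\<in>UNIV. \<bar>(\<Sum>l=1..k s. w s * sigmoid ((T / \<delta>) *\<^sub>R a s \<bullet> x - T / \<delta> * b s (Suc l)))
          - w s * real (i s - 1)\<bar>)"
    by (simp only: sum_subtractf[symmetric] sum_abs)
  also have "\<dots> \<le> (\<Sum>s\<in>UNIV. w s * real (k s) * exp (- T))"
    by (intro sum_mono coord)
  finally show ?thesis
    by (simp add: sum_distrib_right)
qed

lemma sigmoid_network_codes_cells:
  fixes a :: "'n::finite \<Rightarrow> 'a::real_inner" and b :: "'n \<Rightarrow> nat \<Rightarrow> real" and k :: "'n \<Rightarrow> nat"
  assumes "\<delta> > 0" "\<epsilon> > 0" and mono: "\<forall>s. \<forall>j\<in>{1..k s}. b s j < b s (Suc j)"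
  obtains u :: "'n \<Rightarrow> 'a" and \<beta> :: "'n \<Rightarrow> nat \<Rightarrow> real" and v :: "'n \<Rightarrow> nat \<Rightarrow> real"
    and code :: "('n \<Rightarrow> nat) \<Rightarrow> nat"
  where "\<And>i x. \<forall>s. i s \<in> {1..k s} \<Longrightarrow>
           \<forall>s. b s (i s) + \<delta> < a s \<bullet> x \<and> a s \<bullet> x < b s (Suc (i s)) - \<delta> \<Longrightarrow>
           \<bar>(\<Sum>s\<in>UNIV. \<Sum>l=1..k s. v s l * sigmoid (u s \<bullet> x - \<beta> s l)) - real (code i)\<bar> \<le> \<epsilon>"
    and "\<And>i. \<forall>s. i s \<in> {1..k s} \<Longrightarrow> code i < (\<Prod>s\<in>UNIV. k s)"
    and "inj_on code {i. \<forall>s. i s \<in> {1..k s}}"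
proof -
  let ?cells = "{i. \<forall>s. i s \<in> {1..k s}}"
  obtain w where code_less: "\<And>d. \<forall>s. d s < k s \<Longrightarrow> (\<Sum>s\<in>UNIV. d s * w s) < (\<Prod>s\<in>UNIV. k s)"
    and code_inj: "inj_on (\<lambda>d. \<Sum>s\<in>UNIV. d s * w s) {d. \<forall>s. d s < k s}"
    using mixed_radix_code[of k] by blast
  define code where "code i = (\<Sum>s\<in>UNIV. (i s - 1) * w s)" for i :: "'n \<Rightarrow> nat"
  define C where "C = (\<Sum>s\<in>UNIV. real (w s) * real (k s))"
  define T where "T = ln (1 + (C + 1) / \<epsilon>)"
  have "C \<ge> 0"
    unfolding C_def by (intro sum_nonneg) simp
  then have "T > 0" and err: "C * exp (- T) \<le> \<epsilon>"
    using \<open>\<epsilon> > 0\<close> by (auto simp: T_def exp_minus field_simps)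
  have digit: "1 \<le> i s" "i s - 1 < k s" if "i \<in> ?cells" for i s
  proof -
    have "i s \<in> {1..k s}"
      using that by blast
    then show "1 \<le> i s" "i s - 1 < k s"
      by auto
  qed
  show ?thesis
  proof
    show "\<bar>(\<Sum>s\<in>UNIV. \<Sum>l=1..k s. real (w s) * sigmoid ((T / \<delta>) *\<^sub>R a s \<bullet> x - T / \<delta> * b s (Suc l)))
        - real (code i)\<bar> \<le> \<epsilon>"
      if "\<forall>s. i s \<in> {1..k s}" "\<forall>s. b s (i s) + \<delta> < a s \<bullet> x \<and> a s \<bullet> x < b s (Suc (i s)) - \<delta>" for i x
      using sigmoid_network_approx[OF mono \<open>\<delta> > 0\<close> \<open>T > 0\<close> _ that, of "\<lambda>s. real (w s)"] err
      by (simp add: code_def C_def mult.commute)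
    show "code i < (\<Prod>s\<in>UNIV. k s)" if "\<forall>s. i s \<in> {1..k s}" for i
      unfolding code_def using that digit(2) by (intro code_less) simp
    have shift_inj: "inj_on (\<lambda>i s. i s - 1) ?cells"
    proof (rule inj_on_inverseI[where g = "\<lambda>d s. d s + 1"])
      show "(\<lambda>s. i s - 1 + 1) = i" if "i \<in> ?cells" for i
      proof
        show "i s - 1 + 1 = i s" for s
          using digit(1)[OF that, of s] by simp
      qed
    qed
    have "inj_on (\<lambda>d. \<Sum>s\<in>UNIV. d s * w s) ((\<lambda>i s. i s - 1) ` ?cells)"
      using digit(2) by (intro inj_on_subset[OF code_inj]) auto
    from comp_inj_on[OF shift_inj this] show "inj_on code ?cells"
      unfolding code_def[abs_def] comp_def .
  qed
qed

lemma measure_distr_Collect: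
  assumes "F \<in> measurable M N" "Measurable.pred N P"
  shows "measure (distr M N F) {w \<in> space (distr M N F). P w} = measure M {z \<in> space M. P (F z)}"
proof -
  have "{w \<in> space N. P w} \<in> sets N"
    using assms(2) by measurable
  then have "measure (distr M N F) {w \<in> space N. P w} = measure M (F -` {w \<in> space N. P w} \<inter> space M)"
    by (rule measure_distr[OF assms(1)])
  also have "F -` {w \<in> space N. P w} \<inter> space M = {z \<in> space M. P (F z)}"
    using measurable_space[OF assms(1)] by auto
  finally show ?thesis
    by simp
qed

lemma (in finite_measure) measure_Int_eq_of_AE_subset:
  assumes "AE x in M. x \<in> A \<longrightarrow> x \<in> B" "A \<in> sets M" "B \<in> sets M" "Y \<in> sets M"
    and "measure M (B \<inter> Y) = measure M B"
  shows "measure M (A \<inter> Y) = measure M A"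
proof -
  have "measure M (A - Y) \<le> measure M (B - Y)"
    using assms by (intro finite_measure_mono_AE) auto
  also have "\<dots> = 0"
    using assms by (simp add: finite_measure_Diff')
  finally have "measure M (A - Y) = 0"
    by (simp add: antisym)
  then show ?thesis
    using assms by (simp add: finite_measure_Diff')
qed

lemma margin_interval_iff:
  fixes j m :: nat
  assumes "\<bar>x - real m\<bar> < 1/4"
  shows "real j - 5/4 < x \<and> x < real j - 3/4 \<longleftrightarrow> j = m + 1"
proof
  assume "real j - 5/4 < x \<and> x < real j - 3/4"
  with assms have "real m < real j" "real j < real m + 2"
    by linarith+
  then show "j = m + 1"
    by linarith
next
  assume "j = m + 1"
  with assms show "real j - 5/4 < x \<and> x < real j - 3/4"
    unfolding abs_less_iff by simp
qed

lemma k_separable_by_distr_iff: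
  fixes D :: "('a::euclidean_space \<times> nat) measure" and h :: "'a \<Rightarrow> 'b::euclidean_space"
  assumes D: "sets D = sets (borel \<Otimes>\<^sub>M count_space UNIV)" and h: "h \<in> borel_measurable borel"
  shows "k_separable_by (distr D (borel \<Otimes>\<^sub>M count_space UNIV) (\<lambda>z. (h (fst z), snd z))) K \<delta> a \<longleftrightarrow>
    \<delta> > 0 \<and> norm a = 1 \<and>
    (\<exists>b :: nat \<Rightarrow> real. (\<forall>j\<in>{1..K}. b j < b (Suc j)) \<and>
      (\<forall>i\<in>{1..K}. \<exists>y.
         measure D {z \<in> space D. b i + \<delta> < a \<bullet> h (fst z) \<and> a \<bullet> h (fst z) < b (Suc i) - \<delta> \<and> snd z = y}
       = measure D {z \<in> space D. b i + \<delta> < a \<bullet> h (fst z) \<and> a \<bullet> h (fst z) < b (Suc i) - \<delta>}) \<and>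
      measure D {z \<in> space D. \<exists>i\<in>{1..K}. b i + \<delta> < a \<bullet> h (fst z) \<and> a \<bullet> h (fst z) < b (Suc i) - \<delta>} = 1)"
proof -
  let ?D' = "distr D (borel \<Otimes>\<^sub>M count_space UNIV) (\<lambda>z. (h (fst z), snd z))"
  have transfer: "measure ?D' {w \<in> space (borel \<Otimes>\<^sub>M count_space UNIV). P w}
      = measure D {z \<in> space D. P (h (fst z), snd z)}"
    if "Measurable.pred (borel \<Otimes>\<^sub>M count_space UNIV) P" for P
    using measure_distr_Collect[OF _ that, of "\<lambda>z. (h (fst z), snd z)" D] h
    by (simp add: measurable_cong_sets[OF D refl])
  show ?thesis
    unfolding k_separable_by_def by (simp add: transfer)
qed

lemma (in prob_space) code_fibres_pure_and_cover:
  assumes cells: "\<And>i. i \<in> I \<Longrightarrow> C i \<in> events" and labels: "\<And>y. Y y \<in> events"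
    and pure: "\<And>i. i \<in> I \<Longrightarrow> \<exists>y. prob (C i \<inter> Y y) = prob (C i)"
    and cover: "AE x in M. \<exists>i\<in>I. x \<in> C i"
    and inj: "inj_on code I" and range: "\<And>i. i \<in> I \<Longrightarrow> code i < K"
    and A: "\<And>j. A j \<in> events" "\<And>i x j. i \<in> I \<Longrightarrow> x \<in> C i \<Longrightarrow> x \<in> A j \<longleftrightarrow> j = Suc (code i)"
  shows "\<exists>y. prob (A j \<inter> Y y) = prob (A j)" and "AE x in M. \<exists>j\<in>{1..K}. x \<in> A j"
proof -
  show "\<exists>y. prob (A j \<inter> Y y) = prob (A j)"
  proof (cases "\<exists>i\<in>I. j = Suc (code i)")
    case True
    then obtain i where i: "i \<in> I" "j = Suc (code i)"
      by blast
    obtain y where "prob (C i \<inter> Y y) = prob (C i)"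
      using pure[OF i(1)] by blast
    moreover have "AE x in M. x \<in> A j \<longrightarrow> x \<in> C i"
      using cover
    proof eventually_elim
      case (elim x)
      then obtain i' where i': "i' \<in> I" "x \<in> C i'"
        by blast
      show ?case
      proof
        assume "x \<in> A j"
        then have "code i' = code i"
          using A(2)[OF i'] i(2) by simp
        then show "x \<in> C i"
          using inj i(1) i' by (auto dest: inj_onD)
      qed
    qed
    ultimately show ?thesis
      using measure_Int_eq_of_AE_subset[OF _ A(1) cells[OF i(1)] labels] by blast
  next
    case False
    have "AE x in M. x \<in> A j \<longrightarrow> x \<in> {}"
      using cover by eventually_elim (use False A(2) in blast)
    then show ?thesis
      using measure_Int_eq_of_AE_subset[OF _ A(1) sets.empty_sets labels] by auto
  qed
  show "AE x in M. \<exists>j\<in>{1..K}. x \<in> A j"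
  proof (rule AE_mp[OF cover], intro AE_I2 impI)
    fix x
    assume "\<exists>i\<in>I. x \<in> C i"
    then obtain i where "i \<in> I" "x \<in> C i"
      by blast
    then have "x \<in> A (Suc (code i))" "Suc (code i) \<in> {1..K}"
      using A(2) range by (auto simp: Suc_le_eq)
    then show "\<exists>j\<in>{1..K}. x \<in> A j"
      by blast
  qed
qed

lemma k_separable_by_distr_of_coded_cells:
  fixes D :: "('a::euclidean_space \<times> nat) measure" and f :: "'a \<Rightarrow> real"
    and C :: "'i \<Rightarrow> ('a \<times> nat) set" and code :: "'i \<Rightarrow> nat"
  assumes D: "prob_space D" "sets D = sets (borel \<Otimes>\<^sub>M count_space UNIV)"
    and f: "f \<in> borel_measurable borel"
    and cells: "\<And>i. i \<in> I \<Longrightarrow> C i \<in> sets D"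
    and pure: "\<And>i. i \<in> I \<Longrightarrow> \<exists>y. measure D {z \<in> C i. snd z = y} = measure D (C i)"
    and cover: "AE z in D. \<exists>i\<in>I. z \<in> C i"
    and near: "\<And>i z. i \<in> I \<Longrightarrow> z \<in> C i \<Longrightarrow> \<bar>f (fst z) - real (code i)\<bar> < 1/4"
    and inj: "inj_on code I" and range: "\<And>i. i \<in> I \<Longrightarrow> code i < K"
  shows "k_separable_by (distr D (borel \<Otimes>\<^sub>M count_space UNIV) (\<lambda>z. (f (fst z), snd z))) K (1/4) (1::real)"
proof -
  interpret prob_space D by fact
  have space_D: "space D = space (borel \<Otimes>\<^sub>M count_space UNIV)"
    using D(2) by (rule sets_eq_imp_space_eq)
  \<comment> \<open>With margin 1/4 the j-th interval is centred at the integer j - 1.\<close>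
  define b where "b j = real j - 3/2" for j :: nat
  define A where "A j = {z \<in> space D. b j + 1/4 < f (fst z) \<and> f (fst z) < b (Suc j) - 1/4}" for j
  define Y where "Y y = {z \<in> space D. snd z = y}" for y :: nat
  have A_sets: "A j \<in> sets D" and Y_sets: "Y y \<in> sets D" for j y
    unfolding A_def Y_def space_D D(2) using f by measurable
  have C_pure: "\<exists>y. measure D (C i \<inter> Y y) = measure D (C i)" if "i \<in> I" for i
  proof -
    have "{z \<in> C i. snd z = y} = C i \<inter> Y y" for y
      using sets.sets_into_space[OF cells[OF that]] by (auto simp: Y_def)
    then show ?thesis
      using pure[OF that] by simp
  qed
  have in_A: "z \<in> A j \<longleftrightarrow> j = Suc (code i)" if "i \<in> I" "z \<in> C i" for i z j
    using margin_interval_iff[OF near[OF that]] sets.sets_into_space[OF cells[OF that(1)]] that(2)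
    by (auto simp: A_def b_def)
  note fibres = code_fibres_pure_and_cover[OF cells Y_sets C_pure cover inj range A_sets in_A]
  have A_cover: "measure D {z \<in> space D. \<exists>j\<in>{1..K}. z \<in> A j} = 1"
    using fibres(2) A_sets by (subst prob_Collect_eq_1) (auto simp: A_def)
  have A_label: "{z \<in> space D. b j + 1/4 < f (fst z) \<and> f (fst z) < b (Suc j) - 1/4 \<and> snd z = y} = A j \<inter> Y y"
    for j y
    by (auto simp: A_def Y_def)
  show ?thesis
    unfolding k_separable_by_distr_iff[OF D(2) f] inner_real_def mult.left_neutral
  proof (intro conjI exI[of _ b])
    show "\<forall>j\<in>{1..K}. b j < b (Suc j)"
      by (simp add: b_def)
    show "\<forall>j\<in>{1..K}. \<exists>y.
        measure D {z \<in> space D. b j + 1/4 < f (fst z) \<and> f (fst z) < b (Suc j) - 1/4 \<and> snd z = y}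
      = measure D {z \<in> space D. b j + 1/4 < f (fst z) \<and> f (fst z) < b (Suc j) - 1/4}"
      using fibres(1) by (simp add: A_label flip: A_def)
    show "measure D {z \<in> space D. \<exists>j\<in>{1..K}. b j + 1/4 < f (fst z) \<and> f (fst z) < b (Suc j) - 1/4} = 1"
      using A_cover by (simp add: A_def)
  qed simp_all
qed

lemma k_separable_by_distr_rescale:
  fixes D :: "('a::euclidean_space \<times> nat) measure"
    and f :: "'a \<Rightarrow> real" and g :: "'a \<Rightarrow> 'b::euclidean_space"
  assumes D: "sets D = sets (borel \<Otimes>\<^sub>M count_space UNIV)"
    and meas: "f \<in> borel_measurable borel" "g \<in> borel_measurable borel"
    and proj: "\<And>x. a \<bullet> g x = f x / q" and "q > 0" "norm a = 1"
    and sep: "k_separable_by (distr D (borel \<Otimes>\<^sub>M count_space UNIV) (\<lambda>z. (f (fst z), snd z))) K \<delta> 1"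
  shows "k_separable_by (distr D (borel \<Otimes>\<^sub>M count_space UNIV) (\<lambda>z. (g (fst z), snd z))) K (\<delta> / q) a"
proof -
  have scaled: "c / q + \<delta> / q < a \<bullet> g x \<longleftrightarrow> c + \<delta> < f x" "a \<bullet> g x < c / q - \<delta> / q \<longleftrightarrow> f x < c - \<delta>"
    for c x
    using \<open>q > 0\<close> by (simp_all add: proj divide_less_cancel flip: add_divide_distrib diff_divide_distrib)
  from sep obtain b where "\<delta> > 0" "\<forall>j\<in>{1..K}. b j < b (Suc j)"
    and "\<forall>i\<in>{1..K}. \<exists>y. measure D {z \<in> space D. b i + \<delta> < f (fst z) \<and> f (fst z) < b (Suc i) - \<delta> \<and> snd z = y}
         = measure D {z \<in> space D. b i + \<delta> < f (fst z) \<and> f (fst z) < b (Suc i) - \<delta>}"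
    and "measure D {z \<in> space D. \<exists>i\<in>{1..K}. b i + \<delta> < f (fst z) \<and> f (fst z) < b (Suc i) - \<delta>} = 1"
    unfolding k_separable_by_distr_iff[OF D meas(1)] by auto
  then show ?thesis
    unfolding k_separable_by_distr_iff[OF D meas(2)] using \<open>q > 0\<close> \<open>norm a = 1\<close>
    by (intro conjI exI[of _ "\<lambda>j. b j / q"]) (simp_all add: scaled divide_strict_right_mono)
qed

lemma multi_separable_by_sigmoid_sum:
  fixes D :: "('a::euclidean_space \<times> nat) measure" and k :: "'n::finite \<Rightarrow> nat" and a :: "'n \<Rightarrow> 'a"
  assumes D: "prob_space D" "sets D = sets (borel \<Otimes>\<^sub>M count_space UNIV)"
    and sep: "multi_separable_by D k \<delta> a"
  obtains u :: "'n \<Rightarrow> 'a" and \<beta> :: "'n \<Rightarrow> nat \<Rightarrow> real" and v :: "'n \<Rightarrow> nat \<Rightarrow> real"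
  where "k_separable_by (distr D (borel \<Otimes>\<^sub>M count_space UNIV)
      (\<lambda>z. (\<Sum>s\<in>UNIV. \<Sum>l=1..k s. v s l * sigmoid (u s \<bullet> fst z - \<beta> s l), snd z))) (\<Prod>s\<in>UNIV. k s) (1/4) 1"
proof -
  interpret prob_space D by fact
  let ?cells = "{i :: 'n \<Rightarrow> nat. \<forall>s. i s \<in> {1..k s}}"
  obtain b where "\<delta> > 0" and mono: "\<forall>s. \<forall>j\<in>{1..k s}. b s j < b s (Suc j)"
    and pure: "\<forall>i. (\<forall>s. i s \<in> {1..k s}) \<longrightarrow> (\<exists>y.
           measure D {z \<in> space D. (\<forall>s. b s (i s) + \<delta> < a s \<bullet> fst z \<and> a s \<bullet> fst z < b s (Suc (i s)) - \<delta>) \<and> snd z = y}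
         = measure D {z \<in> space D. \<forall>s. b s (i s) + \<delta> < a s \<bullet> fst z \<and> a s \<bullet> fst z < b s (Suc (i s)) - \<delta>})"
    and cover: "measure D {z \<in> space D. \<exists>i. (\<forall>s. i s \<in> {1..k s}) \<and>
            (\<forall>s. b s (i s) + \<delta> < a s \<bullet> fst z \<and> a s \<bullet> fst z < b s (Suc (i s)) - \<delta>)} = 1"
    using sep unfolding multi_separable_by_def by blast
  define cell where "cell i = {z \<in> space D. \<forall>s. b s (i s) + \<delta> < a s \<bullet> fst z \<and> a s \<bullet> fst z < b s (Suc (i s)) - \<delta>}"
    for i
  obtain u \<beta> v code where near: "\<And>i x. \<forall>s. i s \<in> {1..k s} \<Longrightarrow>
           \<forall>s. b s (i s) + \<delta> < a s \<bullet> x \<and> a s \<bullet> x < b s (Suc (i s)) - \<delta> \<Longrightarrow>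
           \<bar>(\<Sum>s\<in>UNIV. \<Sum>l=1..k s. v s l * sigmoid (u s \<bullet> x - \<beta> s l)) - real (code i)\<bar> \<le> 1/8"
    and range: "\<And>i. \<forall>s. i s \<in> {1..k s} \<Longrightarrow> code i < (\<Prod>s\<in>UNIV. k s)"
    and inj: "inj_on code ?cells"
    by (rule sigmoid_network_codes_cells[OF \<open>\<delta> > 0\<close> _ mono, where \<epsilon> = "1/8" and a = a]) (simp, blast)
  have "(\<lambda>x. \<Sum>s\<in>UNIV. \<Sum>l=1..k s. v s l * sigmoid (u s \<bullet> x - \<beta> s l)) \<in> borel_measurable borel"
    by measurable
  then show ?thesis
  proof (intro that k_separable_by_distr_of_coded_cells[OF D, where C = cell and I = ?cells and code = code])
    show "cell i \<in> sets D" for i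
      unfolding cell_def using D(2) by measurable
    show "\<exists>y. measure D {z \<in> cell i. snd z = y} = measure D (cell i)" if "i \<in> ?cells" for i
      using pure that by (simp add: cell_def conj_ac)
    have "{z \<in> space D. \<exists>i. (\<forall>s. i s \<in> {1..k s}) \<and>
        (\<forall>s. b s (i s) + \<delta> < a s \<bullet> fst z \<and> a s \<bullet> fst z < b s (Suc (i s)) - \<delta>)} \<in> sets D"
      using D(2) by measurable
    from prob_Collect_eq_1[THEN iffD1, OF this cover]
    show "AE z in D. \<exists>i\<in>?cells. z \<in> cell i"
      using AE_space by eventually_elim (auto simp: cell_def)
    show "\<bar>(\<Sum>s\<in>UNIV. \<Sum>l=1..k s. v s l * sigmoid (u s \<bullet> fst z - \<beta> s l)) - real (code i)\<bar> < 1/4"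
      if "i \<in> ?cells" "z \<in> cell i" for i z
      using near[of i "fst z"] that by (fastforce simp: cell_def)
  qed (use inj range in auto)
qed

theorem lemma1:
  fixes D :: "((real ^ 'd::finite) \<times> nat) measure"
    and c :: nat
    and k :: "'n::finite \<Rightarrow> nat"
    and \<delta> :: real
    and a :: "'n \<Rightarrow> real ^ 'd"
  assumes "prob_space D"
    and "sets D = sets (borel \<Otimes>\<^sub>M count_space UNIV)"
    and "measure D {z \<in> space D. snd z \<in> {1..c}} = 1"
    and "multi_separable_by D k \<delta> a"
  shows "\<exists>(u :: 'n \<Rightarrow> real ^ 'd) (\<beta> :: 'n \<Rightarrow> nat \<Rightarrow> real) (v :: 'n \<Rightarrow> nat \<Rightarrow> real).
           k_separable_by
             (distr D (borel \<Otimes>\<^sub>M count_space UNIV)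
                (\<lambda>z. ((\<chi> s. \<Sum>l=1..k s. v s l * sigmoid (u s \<bullet> fst z - \<beta> s l)) :: real ^ 'n, snd z)))
             (\<Prod>s\<in>UNIV. k s)
             (1 / (4 * sqrt (real CARD('n))))
             ((\<chi> s. 1 / sqrt (real CARD('n))) :: real ^ 'n)"
proof -
  obtain u \<beta> v where sum_separable: "k_separable_by (distr D (borel \<Otimes>\<^sub>M count_space UNIV)
      (\<lambda>z. (\<Sum>s\<in>UNIV. \<Sum>l=1..k s. v s l * sigmoid (u s \<bullet> fst z - \<beta> s l), snd z))) (\<Prod>s\<in>UNIV. k s) (1/4) 1"
    using multi_separable_by_sigmoid_sum[OF assms(1,2,4)] by blast
  define p where "p x = (\<chi> s. \<Sum>l=1..k s. v s l * sigmoid (u s \<bullet> x - \<beta> s l))" for x :: "real ^ 'd"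
  define q where "q = sqrt (real CARD('n))"
  have "k_separable_by (distr D (borel \<Otimes>\<^sub>M count_space UNIV) (\<lambda>z. (p (fst z), snd z)))
      (\<Prod>s\<in>UNIV. k s) ((1/4) / q) (\<chi> s. 1 / q)"
  proof (rule k_separable_by_distr_rescale[OF assms(2) _ _ _ _ _ sum_separable])
    show "p \<in> borel_measurable borel"
      unfolding p_def
      by (intro borel_measurable_continuous_onI continuous_intros continuous_on_compose2[OF continuous_on_sigmoid]) auto
    show "q > 0"
      by (simp add: q_def)
    then show "(\<chi> s. 1 / q) \<bullet> p x = (\<Sum>s\<in>UNIV. \<Sum>l=1..k s. v s l * sigmoid (u s \<bullet> x - \<beta> s l)) / q" for x
      by (simp add: p_def inner_vec_def sum_divide_distrib)
    show "norm (\<chi> s. 1 / q :: real ^ 'n) = 1"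
      by (simp add: norm_vec_def L2_set_def q_def power_divide)
  qed measurable
  then show ?thesis
    by (auto simp: p_def q_def)
qed

end
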